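(* Let $T$ be a bounded linear operator on the Bergman space $A^2$ and let $0<p<\infty$. Then the function $F(w)=\|TK_w\|^p$ is subharmonic on the unit disk $\mathbb{D}$.
   Context: $\mathbb{D}$ is the open unit disk in $\mathbb{C}$. $dA$ is area measure on $\mathbb{D}$ normalized so that $\mathbb{D}$ has area $1$. $A^2$ is the Hilbert space of analytic functions $f$ on $\mathbb{D}$ with $\|f\|^2=\int_{\mathbb{D}}|f|^2\,dA<\infty$. For $w\in\mathbb{D}$, $K_w(z)=(1-z\overline w)^{-2}$ is the Bergman reproducing kernel, and the norm $\|TK_w\|$ is the norm in $A^2$. *)

theory Defs
  imports "HOL-Analysis.Analysis"
begin

text \<open>Normalized area measure dA = (1/pi) dx dy on the unit disk; Bergman norm.\<close>
definition bergman_norm :: "(complex \<Rightarrow> complex) \<Rightarrow> real" where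
  "bergman_norm f = sqrt ((1 / pi) * (\<integral>z\<in>ball 0 1. (cmod (f z))\<^sup>2 \<partial>lborel))"

text \<open>The Bergman space A^2 (functions are only relevant on the open unit disk).\<close>
definition bergman_space :: "(complex \<Rightarrow> complex) set" where
  "bergman_space = {f. f holomorphic_on ball 0 1 \<and>
      set_integrable lborel (ball 0 1) (\<lambda>z. (cmod (f z))\<^sup>2)}"

definition bergman_kernel :: "complex \<Rightarrow> complex \<Rightarrow> complex" where
  "bergman_kernel w = (\<lambda>z. 1 / (1 - z * cnj w)\<^sup>2)"

text \<open>Bounded linear operator on A^2, functions compared on the disk only.\<close>
definition bounded_op_A2 :: "((complex \<Rightarrow> complex) \<Rightarrow> (complex \<Rightarrow> complex)) \<Rightarrow> bool" where
  "bounded_op_A2 T \<longleftrightarrow>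
     (\<forall>f\<in>bergman_space. T f \<in> bergman_space) \<and>
     (\<forall>f\<in>bergman_space. \<forall>g\<in>bergman_space. \<forall>a b. \<forall>z\<in>ball 0 1.
         T (\<lambda>x. a * f x + b * g x) z = a * T f z + b * T g z) \<and>
     (\<exists>C. \<forall>f\<in>bergman_space. bergman_norm (T f) \<le> C * bergman_norm f)"

definition upper_semicontinuous_on :: "'a::topological_space set \<Rightarrow> ('a \<Rightarrow> real) \<Rightarrow> bool" where
  "upper_semicontinuous_on S F \<longleftrightarrow>
     (\<forall>a\<in>S. \<forall>c. F a < c \<longrightarrow> (\<forall>\<^sub>F x in at a within S. F x < c))"

definition subharmonic_on :: "complex set \<Rightarrow> (complex \<Rightarrow> real) \<Rightarrow> bool" where
  "subharmonic_on S F \<longleftrightarrow> upper_semicontinuous_on S F \<and>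
     (\<forall>a r. r > 0 \<and> cball a r \<subseteq> S \<longrightarrow>
        set_integrable lborel {0..2*pi} (\<lambda>t. F (a + r * cis t)) \<and>
        F a \<le> (1 / (2*pi)) * (\<integral>t\<in>{0..2*pi}. F (a + r * cis t) \<partial>lborel))"

end

theory Submission
  imports Defs "HOL-Computational_Algebra.Fundamental_Theorem_Algebra"
begin

text \<open>Fix \<open>a\<close> in the disc and put \<open>h = T K\<^sub>a\<close>. Expanding \<open>K\<^sub>a\<^sub>+\<^sub>\<zeta>\<close> in powers of
  \<open>cnj \<zeta>\<close> and applying \<open>T\<close> termwise shows that \<open>\<psi>(\<zeta>) = cnj \<langle>T K\<^sub>a\<^sub>+\<^sub>\<zeta>, h\<rangle>\<close> is a
  convergent power series with \<open>\<psi>(0) = \<parallel>h\<parallel>\<^sup>2\<close>, while Cauchy--Schwarz gives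
  \<open>|\<psi>(\<zeta>)| \<le> \<parallel>T K\<^sub>a\<^sub>+\<^sub>\<zeta>\<parallel> \<parallel>h\<parallel>\<close>. For every \<open>p > 0\<close>, \<open>|\<psi>|\<^sup>p\<close> has the sub-mean-value
  property on circles, so \<open>\<parallel>h\<parallel>\<^sup>2\<^sup>p\<close> is at most \<open>\<parallel>h\<parallel>\<^sup>p\<close> times the circle mean of
  \<open>\<parallel>T K\<^sub>w\<parallel>\<^sup>p\<close>; dividing by \<open>\<parallel>h\<parallel>\<^sup>p\<close> gives the sub-mean-value property of
  \<open>w \<mapsto> \<parallel>T K\<^sub>w\<parallel>\<^sup>p\<close>, and continuity comes from the Lipschitz dependence of \<open>K\<^sub>w\<close> on \<open>w\<close>.

  The sub-mean-value property of \<open>|\<psi>|\<^sup>p\<close> is reduced to polynomials. After factoring,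
  each root contributes a factor \<open>|1 - w e\<^sup>i\<^sup>t|\<^sup>p\<close> with \<open>|w| \<le> 1\<close> (roots inside the circle
  are reflected), and since \<open>ln |1 - w e\<^sup>i\<^sup>t|\<close> has mean zero for \<open>|w| < 1\<close>, the
  inequality \<open>exp x \<ge> 1 + x\<close> shows that the product has mean at least \<open>1\<close>.\<close>

lemma set_integral_mono':
  fixes f g :: "'a \<Rightarrow> real"
  assumes "set_integrable M A f" "\<And>x. x \<in> A \<Longrightarrow> g x \<le> f x" "\<And>x. x \<in> A \<Longrightarrow> 0 \<le> f x"
  shows "(LINT x:A|M. g x) \<le> (LINT x:A|M. f x)"
  using assms unfolding set_integrable_def set_lebesgue_integral_def
  by (intro integral_mono') (auto simp: indicator_def)

lemma set_integral_cis_nat_mult: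
  assumes "n \<ge> 1"
  shows "(LINT t:{0..2*pi}|lborel. cis (real n * t)) = 0"
proof -
  have deriv: "((\<lambda>t. exp (\<i> * of_nat n * of_real t) / (\<i> * of_nat n)) has_vector_derivative
      exp (\<i> * of_nat n * of_real t)) (at t within {0..2*pi})" for t
    by (rule has_vector_derivative_real_field) (use assms in \<open>auto intro!: derivative_eq_intros\<close>)
  have "exp (\<i> * of_nat n * of_real (2*pi)) = 1"
    using exp_integer_2pi[of "of_nat n"] by (simp add: mult_ac)
  then have "((\<lambda>t. exp (\<i> * of_nat n * of_real t)) has_integral 0) {0..2*pi}"
    using fundamental_theorem_of_calculus[OF _ deriv] by simp
  moreover have "exp (\<i> * of_nat n * of_real t) = cis (real n * t)" for t
    by (simp add: cis_conv_exp mult_ac)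
  ultimately have "((\<lambda>t. cis (real n * t)) has_integral 0) {0..2*pi}"
    by simp
  moreover have "set_integrable lborel {0..2*pi} (\<lambda>t. cis (real n * t))"
    by (intro borel_integrable_atLeastAtMost' continuous_intros)
  ultimately show ?thesis
    by (simp add: set_borel_integral_eq_integral integral_unique)
qed

lemma power_series_cis_integral:
  fixes c :: "nat \<Rightarrow> complex"
  assumes summable: "summable (\<lambda>n. norm (c n))"
  shows "set_integrable lborel {0..2*pi} (\<lambda>t. \<Sum>n. c n * cis t ^ n)"
    and "(LINT t:{0..2*pi}|lborel. \<Sum>n. c n * cis t ^ n) = 2*pi * c 0"
proof -
  define A where "A = {0..2*pi}"
  define f where "f n t = indicator A t *\<^sub>R (c n * cis t ^ n)" for n t
  have f_int: "integrable lborel (f n)" for n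
    unfolding f_def A_def by (rule borel_integrable_compact) (auto intro!: continuous_intros)
  have norm_f: "norm (f n t) = indicator A t * norm (c n)" for n t
    by (simp add: f_def indicator_def norm_mult norm_power)
  have "summable (\<lambda>n. norm (f n t))" for t
    unfolding norm_f by (rule summable_mult[OF summable])
  then have summable_pointwise: "AE t in lborel. summable (\<lambda>n. norm (f n t))"
    by simp
  have "summable (\<lambda>n. (\<integral>t. norm (f n t) \<partial>lborel))"
    using summable_mult[OF summable, of "2*pi"] by (simp add: norm_f A_def)
  note suminf_f = integrable_suminf[OF f_int summable_pointwise this]
    integral_suminf[OF f_int summable_pointwise this]
  have "summable (\<lambda>n. c n * cis t ^ n)" for t
    by (rule summable_norm_cancel) (simp add: norm_mult norm_power summable)
  then have "(\<lambda>t. \<Sum>n. f n t) = (\<lambda>t. indicator A t *\<^sub>R (\<Sum>n. c n * cis t ^ n))"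
    by (simp add: f_def suminf_scaleR_right)
  moreover have "integral\<^sup>L lborel (f n) = (if n = 0 then 2*pi * c 0 else 0)" for n
  proof (cases "n = 0")
    case False
    have "integral\<^sup>L lborel (f n) = (LINT t:A|lborel. c n * cis (real n * t))"
      unfolding f_def[abs_def] set_lebesgue_integral_def Complex.DeMoivre ..
    also have "\<dots> = c n * (LINT t:A|lborel. cis (real n * t))"
      by (rule set_integral_mult_right)
    finally show ?thesis
      using False set_integral_cis_nat_mult[of n] by (simp add: A_def)
  next
    case True
    then show ?thesis
      by (simp add: f_def[abs_def] A_def set_integral_const scaleR_conv_of_real flip: set_lebesgue_integral_def)
  qed
  then have "(\<Sum>n. integral\<^sup>L lborel (f n)) = 2*pi * c 0"
    using sums_single[of 0 "\<lambda>_. 2*pi * c 0"] by (simp add: sums_iff)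
  ultimately show "set_integrable lborel {0..2*pi} (\<lambda>t. \<Sum>n. c n * cis t ^ n)"
    and "(LINT t:{0..2*pi}|lborel. \<Sum>n. c n * cis t ^ n) = 2*pi * c 0"
    using suminf_f by (simp_all add: set_integrable_def set_lebesgue_integral_def A_def)
qed

lemma one_minus_mult_cis_nonzero:
  assumes "cmod w < 1"
  shows "1 - w * cis t \<noteq> 0"
proof
  assume "1 - w * cis t = 0"
  then have "cmod (w * cis t) = 1"
    by (metis eq_iff_diff_eq_0 norm_one)
  with assms show False
    by (simp add: norm_mult)
qed

lemma ln_norm_one_minus_cis_integral:
  assumes w: "cmod w < 1"
  shows "set_integrable lborel {0..2*pi} (\<lambda>t. ln (cmod (1 - w * cis t)))"
    and "(LINT t:{0..2*pi}|lborel. ln (cmod (1 - w * cis t))) = 0"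
proof -
  define c where "c n = - (w ^ n) / of_nat n" for n
  have "(\<lambda>n. c n * cis t ^ n) sums Ln (1 - w * cis t)" for t
    using Ln_series'[of "- (w * cis t)"] w by (simp add: c_def norm_mult power_mult_distrib)
  then have Ln_eq: "Ln (1 - w * cis t) = (\<Sum>n. c n * cis t ^ n)" for t
    by (simp add: sums_iff)
  have "norm (c n) \<le> cmod w ^ n" for n
    by (cases "n = 0") (auto simp: c_def norm_divide norm_power divide_le_eq
        intro: mult_le_cancel_left1[THEN iffD2])
  then have "summable (\<lambda>n. norm (c n))"
    using w by (intro summable_comparison_test'[OF summable_geometric[of "cmod w"]]) auto
  note Ln_integral = power_series_cis_integral[OF this, folded Ln_eq]
  have Re_Ln_eq: "Re (Ln (1 - w * cis t)) = ln (cmod (1 - w * cis t))" for t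
    using one_minus_mult_cis_nonzero[OF w] by (simp add: Re_Ln)
  have Ln_int: "integrable lborel (\<lambda>t. indicator {0..2*pi} t *\<^sub>R Ln (1 - w * cis t))"
    using Ln_integral(1) by (simp add: set_integrable_def)
  show "set_integrable lborel {0..2*pi} (\<lambda>t. ln (cmod (1 - w * cis t)))"
    using integrable_Re[OF Ln_int] by (simp add: set_integrable_def Re_Ln_eq)
  show "(LINT t:{0..2*pi}|lborel. ln (cmod (1 - w * cis t))) = 0"
    using integral_Re[OF Ln_int] Ln_integral(2) by (simp add: set_lebesgue_integral_def Re_Ln_eq c_def)
qed

lemma circle_integral_prod_powr_ge_strict:
  fixes w :: "nat \<Rightarrow> complex" and p :: real
  assumes w: "\<And>i. i < n \<Longrightarrow> cmod (w i) < 1" and p: "p > 0"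
  shows "2*pi \<le> (LINT t:{0..2*pi}|lborel. (\<Prod>i<n. cmod (1 - w i * cis t) powr p))"
proof -
  define L where "L t = (\<Sum>i<n. p * ln (cmod (1 - w i * cis t)))" for t
  have "(\<Prod>i<n. cmod (1 - w i * cis t) powr p) = exp (L t)" for t
    using one_minus_mult_cis_nonzero[OF w] by (simp add: L_def exp_sum powr_def)
  then have exp_ge: "1 + L t \<le> (\<Prod>i<n. cmod (1 - w i * cis t) powr p)" for t
    by (simp add: exp_ge_add_one_self)
  have L_int: "set_integrable lborel {0..2*pi} L"
    and L_integral: "(LINT t:{0..2*pi}|lborel. L t) = 0"
    using ln_norm_one_minus_cis_integral[OF w]
    by (auto simp: L_def set_integrable_def set_lebesgue_integral_def sum_distrib_left
        mult.left_commute[of _ p] intro!: sum.neutral)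
  have const_int: "set_integrable lborel {0..2*pi} (\<lambda>_. 1::real)"
    by (intro borel_integrable_atLeastAtMost' continuous_intros)
  have "2*pi = (LINT t:{0..2*pi}|lborel. 1 + L t)"
    using L_integral by (simp add: set_integral_add[OF const_int L_int] set_integral_const)
  also have "\<dots> \<le> (LINT t:{0..2*pi}|lborel. (\<Prod>i<n. cmod (1 - w i * cis t) powr p))"
    using p
    by (intro set_integral_mono set_integral_add const_int L_int exp_ge
        borel_integrable_atLeastAtMost' continuous_intros continuous_on_powr') auto
  finally show ?thesis .
qed

lemma circle_integral_prod_powr_ge:
  fixes w :: "nat \<Rightarrow> complex" and p :: real
  assumes w: "\<And>i. i < n \<Longrightarrow> cmod (w i) \<le> 1" and p: "p > 0"
  shows "2*pi \<le> (LINT t:{0..2*pi}|lborel. (\<Prod>i<n. cmod (1 - w i * cis t) powr p))"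
proof -
  define A where "A = {0..2*pi}"
  define g where "g u t = indicator A t * (\<Prod>i<n. cmod (1 - u i * cis t) powr p)" for u t
  define e where "e m = 1 - 1 / (real m + 2)" for m
  have e: "0 \<le> e m" "e m < 1" for m
    by (auto simp: e_def field_simps)
  have e_lim: "e \<longlonglongrightarrow> 1"
    unfolding e_def by real_asymp
  have g_int: "integrable lborel (g u)" for u
  proof -
    have "continuous_on {0..2*pi} (\<lambda>t. \<Prod>i<n. cmod (1 - u i * cis t) powr p)"
      using p by (auto intro!: continuous_intros continuous_on_powr')
    from borel_integrable_atLeastAtMost'[OF this] show ?thesis
      by (simp add: g_def[abs_def] A_def set_integrable_def)
  qed
  have "cmod (1 - of_real (e m) * w i * cis t) \<le> 2" if "i < n" for m i t
  proof -
    have "cmod (1 - of_real (e m) * w i * cis t) \<le> 1 + e m * cmod (w i)"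
      using norm_triangle_ineq4[of 1 "of_real (e m) * w i * cis t"] e(1)[of m]
      by (simp add: norm_mult)
    also have "e m * cmod (w i) \<le> 1"
      using e[of m] w[OF that] by (intro mult_le_one) auto
    finally show ?thesis by simp
  qed
  then have g_bound: "norm (g (\<lambda>i. of_real (e m) * w i) t) \<le> indicator A t * (2 powr p) ^ n" for m t
    using p by (auto simp: g_def indicator_def abs_prod prod_nonneg
        intro!: prod_le_power powr_mono2 ge_one_powr_ge_zero)
  have g_lim: "(\<lambda>m. g (\<lambda>i. of_real (e m) * w i) t) \<longlonglongrightarrow> g w t" for t
    unfolding g_def using e_lim p
    by (auto intro!: tendsto_eq_intros tendsto_powr')
  have "(\<lambda>m. integral\<^sup>L lborel (g (\<lambda>i. of_real (e m) * w i))) \<longlonglongrightarrow> integral\<^sup>L lborel (g w)"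
    by (rule integral_dominated_convergence[where w="\<lambda>t. indicator A t * (2 powr p) ^ n"])
       (use g_int g_bound g_lim in \<open>auto simp: A_def\<close>)
  moreover have "2*pi \<le> integral\<^sup>L lborel (g (\<lambda>i. of_real (e m) * w i))" for m
  proof -
    have "cmod (of_real (e m) * w i) < 1" if "i < n" for i
      using e[of m] w[OF that] mult_left_le[of "cmod (w i)" "e m"] by (simp add: norm_mult)
    from circle_integral_prod_powr_ge_strict[of n "\<lambda>i. of_real (e m) * w i", OF this p]
    show ?thesis
      by (simp add: g_def[abs_def] A_def set_lebesgue_integral_def)
  qed
  ultimately have "2*pi \<le> integral\<^sup>L lborel (g w)"
    by (intro LIMSEQ_le_const) auto
  then show ?thesis
    by (simp add: g_def[abs_def] A_def set_lebesgue_integral_def)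
qed

lemma norm_circle_minus_factor:
  fixes a :: complex and r :: real
  assumes r: "r > 0" and a: "a \<noteq> 0"
  obtains D w where "cmod w \<le> 1" "cmod a \<le> D"
    "\<And>t. cmod (of_real r * cis t - a) = D * cmod (1 - w * cis t)"
proof (cases "r \<le> cmod a")
  case True
  have "cmod (of_real r * cis t - a) = cmod a * cmod (1 - of_real r / a * cis t)" for t
  proof -
    have "a * (1 - of_real r / a * cis t) = a - of_real r * cis t"
      using a by (simp add: field_simps)
    then show ?thesis
      by (metis norm_minus_commute norm_mult)
  qed
  with True a r show ?thesis
    by (intro that[of "of_real r / a" "cmod a"]) (auto simp: norm_divide)
next
  case False
  have "cmod (of_real r * cis t - a) = r * cmod (1 - cnj a / of_real r * cis t)" for t
  proof -
    have "cnj (of_real r * (1 - cnj a / of_real r * cis t)) = cis (-t) * (of_real r * cis t - a)"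
      using r by (simp add: field_simps cis_cnj cis_mult flip: cis_divide)
    then have "cmod (of_real r * (1 - cnj a / of_real r * cis t)) = cmod (of_real r * cis t - a)"
      by (metis complex_mod_cnj mult_cancel_right1 norm_cis norm_mult)
    with r show ?thesis
      by (simp add: norm_mult)
  qed
  with False r show ?thesis
    by (intro that[of "cnj a / of_real r" r]) (auto simp: norm_divide)
qed

lemma poly_circle_integral_powr_ge:
  fixes P :: "complex poly" and r p :: real
  assumes P0: "poly P 0 \<noteq> 0" and r: "r > 0" and p: "p > 0"
  shows "2*pi * cmod (poly P 0) powr p \<le> (LINT t:{0..2*pi}|lborel. cmod (poly P (of_real r * cis t)) powr p)"
proof -
  obtain root where decompose: "smult (lead_coeff P) (\<Prod>i<degree P. [:-root i, 1:]) = P"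
    using complex_poly_decompose' by blast
  have P_eq: "poly P z = lead_coeff P * (\<Prod>i<degree P. z - root i)" for z
    by (subst decompose[symmetric]) (simp add: poly_prod)
  define n where "n = degree P"
  have "root i \<noteq> 0" if "i < n" for i
    using P0 that by (auto simp: P_eq n_def)
  then have "\<forall>i. \<exists>D w. i < n \<longrightarrow> cmod w \<le> 1 \<and> cmod (root i) \<le> D \<and>
      (\<forall>t. cmod (of_real r * cis t - root i) = D * cmod (1 - w * cis t))"
    using norm_circle_minus_factor[OF r] by metis
  then obtain D w where w: "\<And>i. i < n \<Longrightarrow> cmod (w i) \<le> 1"
    and D: "\<And>i. i < n \<Longrightarrow> cmod (root i) \<le> D i"
    and factor: "\<And>i t. i < n \<Longrightarrow> cmod (of_real r * cis t - root i) = D i * cmod (1 - w i * cis t)"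
    by metis
  define M where "M = cmod (lead_coeff P) * (\<Prod>i<n. D i)"
  have "cmod (poly P (of_real r * cis t)) = M * (\<Prod>i<n. cmod (1 - w i * cis t))" for t
    by (simp add: M_def P_eq norm_mult prod_norm[symmetric] factor prod.distrib flip: n_def)
  moreover have "M \<ge> 0"
    unfolding M_def by (intro mult_nonneg_nonneg prod_nonneg norm_ge_zero order_trans[OF _ D]) auto
  ultimately have integrand: "cmod (poly P (of_real r * cis t)) powr p =
      M powr p * (\<Prod>i<n. cmod (1 - w i * cis t) powr p)" for t
    by (simp add: powr_mult prod_powr_distrib)
  have "cmod (poly P 0) = cmod (lead_coeff P) * (\<Prod>i<n. cmod (root i))"
    by (simp add: P_eq norm_mult prod_norm[symmetric] n_def)
  also have "\<dots> \<le> M"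
    unfolding M_def by (intro mult_left_mono prod_mono) (use D in auto)
  finally have "2*pi * cmod (poly P 0) powr p \<le> M powr p * (2*pi)"
    using p by (simp add: powr_mono2)
  also have "\<dots> \<le> M powr p * (LINT t:{0..2*pi}|lborel. (\<Prod>i<n. cmod (1 - w i * cis t) powr p))"
    using circle_integral_prod_powr_ge[OF w p] by (intro mult_left_mono) auto
  also have "\<dots> = (LINT t:{0..2*pi}|lborel. cmod (poly P (of_real r * cis t)) powr p)"
    unfolding integrand by (rule set_integral_mult_right[symmetric])
  finally show ?thesis .
qed

lemma power_series_circle_integral_powr_ge:
  fixes c :: "nat \<Rightarrow> complex" and r p :: real
  assumes summable: "summable (\<lambda>n. cmod (c n) * r^n)" and r: "r > 0" and p: "p > 0"
  shows "2*pi * cmod (c 0) powr p \<le>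
    (LINT t:{0..2*pi}|lborel. cmod (\<Sum>n. c n * (of_real r * cis t)^n) powr p)"
proof (cases "c 0 = 0")
  case True
  then show ?thesis
    by (simp add: set_lebesgue_integral_def integral_nonneg_AE)
next
  case False
  define A where "A = {0..2*pi}"
  define s where "s N t = indicator A t * cmod (\<Sum>n<Suc N. c n * (of_real r * cis t)^n) powr p" for N t
  define f where "f t = indicator A t * cmod (\<Sum>n. c n * (of_real r * cis t)^n) powr p" for t
  have norm_term: "norm (c n * (of_real r * cis t)^n) = cmod (c n) * r^n" for n t
    using r by (simp add: norm_mult norm_power)
  have "summable (\<lambda>n. c n * (of_real r * cis t)^n)" for t
    by (rule summable_norm_cancel) (simp add: norm_term summable)
  then have s_lim: "(\<lambda>N. s N t) \<longlonglongrightarrow> f t" for t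
    unfolding s_def f_def using p
    by (intro tendsto_intros tendsto_powr' LIMSEQ_Suc summable_LIMSEQ) auto
  have s_int: "integrable lborel (s N)" for N
  proof -
    have "continuous_on A (\<lambda>t. cmod (\<Sum>n<Suc N. c n * (of_real r * cis t)^n) powr p)"
      using p by (auto intro!: continuous_intros continuous_on_powr')
    from borel_integrable_atLeastAtMost'[OF this[unfolded A_def]] show ?thesis
      by (simp add: s_def[abs_def] A_def set_integrable_def)
  qed
  have f_meas: "f \<in> borel_measurable lborel"
    using s_int by (intro borel_measurable_LIMSEQ_metric[OF _ s_lim]) auto
  define B where "B = (\<Sum>n. cmod (c n) * r^n)"
  have "cmod (\<Sum>n<Suc N. c n * (of_real r * cis t)^n) \<le> (\<Sum>n<Suc N. cmod (c n) * r^n)" for N t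
    by (rule norm_sum[THEN order_trans]) (simp add: norm_term)
  moreover have "(\<Sum>n<Suc N. cmod (c n) * r^n) \<le> B" for N
    unfolding B_def by (rule sum_le_suminf[OF summable]) (use r in auto)
  ultimately have "cmod (\<Sum>n<Suc N. c n * (of_real r * cis t)^n) \<le> B" for N t
    by (meson order_trans)
  then have s_bound: "norm (s N t) \<le> indicator A t * B powr p" for N t
    using p by (auto simp: s_def indicator_def simp del: sum.lessThan_Suc intro!: powr_mono2)
  have "(\<lambda>N. integral\<^sup>L lborel (s N)) \<longlonglongrightarrow> integral\<^sup>L lborel f"
    by (rule integral_dominated_convergence[where w="\<lambda>t. indicator A t * B powr p"])
       (use f_meas s_int s_bound s_lim in \<open>auto simp: A_def\<close>)
  moreover have "2*pi * cmod (c 0) powr p \<le> integral\<^sup>L lborel (s N)" for N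
  proof -
    define P where "P = (\<Sum>n<Suc N. monom (c n) n)"
    have poly_P: "poly P z = (\<Sum>n<Suc N. c n * z^n)" for z
      by (simp add: P_def poly_sum poly_monom)
    then have "poly P 0 = c 0"
      by (simp add: sum.lessThan_Suc_shift del: sum.lessThan_Suc)
    with poly_circle_integral_powr_ge[of P r p] False r p show ?thesis
      by (simp add: s_def[abs_def] set_lebesgue_integral_def A_def poly_P)
  qed
  ultimately have "2*pi * cmod (c 0) powr p \<le> integral\<^sup>L lborel f"
    by (intro LIMSEQ_le_const) auto
  then show ?thesis
    by (simp add: f_def[abs_def] set_lebesgue_integral_def A_def)
qed

lemma bergman_norm_nonneg: "bergman_norm f \<ge> 0"
  by (simp add: bergman_norm_def set_lebesgue_integral_def integral_nonneg_AE)

lemma bergman_norm_power2: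
  "(bergman_norm f)\<^sup>2 = (1 / pi) * (LINT z:ball 0 1|lborel. (cmod (f z))\<^sup>2)"
  by (simp add: bergman_norm_def set_lebesgue_integral_def integral_nonneg_AE)

lemma bergman_norm_cong:
  assumes "\<And>z. z \<in> ball 0 1 \<Longrightarrow> f z = g z"
  shows "bergman_norm f = bergman_norm g"
proof -
  have "(LINT z:ball 0 1|lborel. (cmod (f z))\<^sup>2) = (LINT z:ball 0 1|lborel. (cmod (g z))\<^sup>2)"
    by (rule set_lebesgue_integral_cong) (use assms in auto)
  then show ?thesis
    by (simp add: bergman_norm_def)
qed

lemma continuous_on_bergman_space: "f \<in> bergman_space \<Longrightarrow> continuous_on (ball 0 1) f"
  by (auto simp: bergman_space_def intro: holomorphic_on_imp_continuous_on)

lemma set_integrable_bergman_space: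
  "f \<in> bergman_space \<Longrightarrow> set_integrable lborel (ball 0 1) (\<lambda>z. (cmod (f z))\<^sup>2)"
  by (simp add: bergman_space_def)

lemma set_borel_measurable_disc:
  fixes f :: "complex \<Rightarrow> 'b::real_normed_vector"
  shows "continuous_on (ball 0 1) f \<Longrightarrow> set_borel_measurable lborel (ball 0 1) f"
  using set_measurable_continuous_on[of "ball 0 1" f] by (simp add: set_borel_measurable_def)

lemma set_integrable_disc_const: "set_integrable lborel (ball (0::complex) 1) (\<lambda>_. c::real)"
  using has_bochner_integral_indicator[of "ball 0 1" lborel c] emeasure_bounded_finite[of "ball 0 1"]
  by (auto simp: set_integrable_def intro: integrable.intros)

lemma set_integrable_disc_bounded:
  fixes f :: "complex \<Rightarrow> complex"
  assumes "continuous_on (ball 0 1) f" "\<And>z. z \<in> ball 0 1 \<Longrightarrow> cmod (f z) \<le> M"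
  shows "set_integrable lborel (ball 0 1) (\<lambda>z. (cmod (f z))\<^sup>2)"
proof (rule set_integrable_bound[OF set_integrable_disc_const[of "M\<^sup>2"]])
  show "set_borel_measurable lborel (ball 0 1) (\<lambda>z. (cmod (f z))\<^sup>2)"
    by (intro set_borel_measurable_disc continuous_intros assms(1))
  show "AE z in lborel. z \<in> ball 0 1 \<longrightarrow> norm ((cmod (f z))\<^sup>2) \<le> norm (M\<^sup>2)"
    using assms(2) by (auto intro!: power_mono simp: abs_le_square_iff)
qed

lemma bergman_norm_le_bound:
  assumes "continuous_on (ball 0 1) f" "\<And>z. z \<in> ball 0 1 \<Longrightarrow> cmod (f z) \<le> M"
  shows "bergman_norm f \<le> M"
proof -
  have "cmod (f 0) \<le> M"
    using assms(2) by simp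
  then have M: "M \<ge> 0"
    using norm_ge_zero order_trans by blast
  have "(LINT z:ball 0 1|lborel. (cmod (f z))\<^sup>2) \<le> (LINT z:ball (0::complex) 1|lborel. M\<^sup>2)"
    by (rule set_integral_mono[OF set_integrable_disc_bounded[OF assms] set_integrable_disc_const])
       (use assms(2) in \<open>auto intro!: power_mono\<close>)
  also have "\<dots> = pi * M\<^sup>2"
    using content_ball[where c="0::complex" and r=1] emeasure_bounded_finite[of "ball (0::complex) 1"]
      set_integral_const[of "ball (0::complex) 1" lborel "M\<^sup>2"]
    by (simp add: unit_ball_vol_2)
  finally have "(bergman_norm f)\<^sup>2 \<le> M\<^sup>2"
    by (simp add: bergman_norm_power2 field_simps)
  with M show ?thesis
    by (simp add: power2_le_iff_abs_le)
qed

lemma bounded_in_bergman_space: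
  fixes f :: "complex \<Rightarrow> complex"
  assumes "f holomorphic_on ball 0 1" "\<And>z. z \<in> ball 0 1 \<Longrightarrow> cmod (f z) \<le> M"
  shows "f \<in> bergman_space"
  using set_integrable_disc_bounded[OF holomorphic_on_imp_continuous_on[OF assms(1)] assms(2)] assms(1)
  by (simp add: bergman_space_def)

lemma bergman_space_lincomb:
  assumes f: "f \<in> bergman_space" and g: "g \<in> bergman_space"
  shows "(\<lambda>z. a * f z + b * g z) \<in> bergman_space"
proof -
  define B where "B z = 2 * (cmod a)\<^sup>2 * (cmod (f z))\<^sup>2 + 2 * (cmod b)\<^sup>2 * (cmod (g z))\<^sup>2" for z
  have "(cmod (a * f z + b * g z))\<^sup>2 \<le> (cmod a * cmod (f z) + cmod b * cmod (g z))\<^sup>2" for z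
    using norm_triangle_ineq[of "a * f z" "b * g z"] by (intro power_mono) (auto simp: norm_mult)
  also have "\<dots> z \<le> B z" for z
    using sum_squares_bound[of "cmod a * cmod (f z)" "cmod b * cmod (g z)"]
    by (simp add: B_def power2_sum power_mult_distrib)
  finally have bound: "(cmod (a * f z + b * g z))\<^sup>2 \<le> B z" for z .
  have "set_integrable lborel (ball 0 1) B"
    unfolding B_def using f g
    by (intro set_integral_add set_integral_mult_right) (auto simp: set_integrable_bergman_space)
  moreover have "set_borel_measurable lborel (ball 0 1) (\<lambda>z. (cmod (a * f z + b * g z))\<^sup>2)"
    using continuous_on_bergman_space[OF f] continuous_on_bergman_space[OF g]
    by (intro set_borel_measurable_disc continuous_intros)
  ultimately have "set_integrable lborel (ball 0 1) (\<lambda>z. (cmod (a * f z + b * g z))\<^sup>2)"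
    by (rule set_integrable_bound) (use bound in \<open>auto intro!: AE_I2 order_trans[OF _ abs_ge_self]\<close>)
  with f g show ?thesis
    by (auto simp: bergman_space_def intro!: holomorphic_intros)
qed

lemma bergman_space_diff:
  "f \<in> bergman_space \<Longrightarrow> g \<in> bergman_space \<Longrightarrow> (\<lambda>z. f z - g z) \<in> bergman_space"
  using bergman_space_lincomb[of f g 1 "-1"] by simp

lemma bergman_space_sum:
  fixes N :: nat
  assumes "\<And>n. n < N \<Longrightarrow> g n \<in> bergman_space"
  shows "(\<lambda>z. \<Sum>n<N. c n * g n z) \<in> bergman_space"
  using assms
proof (induction N)
  case 0
  show ?case
    using bounded_in_bergman_space[of "\<lambda>z. 0" 0] by simp
next
  case (Suc N)
  then show ?case
    using bergman_space_lincomb[of "\<lambda>z. \<Sum>n<N. c n * g n z" "g N" 1 "c N"] by simp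
qed

definition bergman_inner :: "(complex \<Rightarrow> complex) \<Rightarrow> (complex \<Rightarrow> complex) \<Rightarrow> complex" where
  "bergman_inner f g = of_real (1 / pi) * (LINT z:ball 0 1|lborel. f z * cnj (g z))"

lemma set_integrable_bergman_inner:
  assumes f: "f \<in> bergman_space" and g: "g \<in> bergman_space"
  shows "set_integrable lborel (ball 0 1) (\<lambda>z. f z * cnj (g z))"
proof (rule set_integrable_bound)
  show "set_integrable lborel (ball 0 1) (\<lambda>z. (cmod (f z))\<^sup>2 + (cmod (g z))\<^sup>2)"
    using f g by (intro set_integral_add) (auto simp: set_integrable_bergman_space)
  show "set_borel_measurable lborel (ball 0 1) (\<lambda>z. f z * cnj (g z))"
    using continuous_on_bergman_space[OF f] continuous_on_bergman_space[OF g]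
    by (intro set_borel_measurable_disc continuous_intros)
  have "cmod (f z) * cmod (g z) \<le> (cmod (f z))\<^sup>2 + (cmod (g z))\<^sup>2" for z
    using sum_squares_bound[of "cmod (f z)" "cmod (g z)"] mult_nonneg_nonneg[OF norm_ge_zero norm_ge_zero, of "f z" "g z"]
    by linarith
  then show "AE z in lborel. z \<in> ball 0 1 \<longrightarrow> norm (f z * cnj (g z)) \<le> norm ((cmod (f z))\<^sup>2 + (cmod (g z))\<^sup>2)"
    by (auto simp: norm_mult)
qed

lemma bergman_inner_self: "bergman_inner f f = of_real ((bergman_norm f)\<^sup>2)"
proof -
  have "(LINT z:ball 0 1|lborel. f z * cnj (f z)) = (LINT z:ball 0 1|lborel. of_real ((cmod (f z))\<^sup>2))"
    by (simp only: complex_norm_square)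
  also have "\<dots> = of_real (LINT z:ball 0 1|lborel. (cmod (f z))\<^sup>2)"
    by (rule set_integral_complex_of_real)
  finally show ?thesis
    by (simp add: bergman_inner_def bergman_norm_power2)
qed

lemma bergman_inner_cong:
  assumes "\<And>z. z \<in> ball 0 1 \<Longrightarrow> f z = g z"
  shows "bergman_inner f h = bergman_inner g h"
proof -
  have "(LINT z:ball 0 1|lborel. f z * cnj (h z)) = (LINT z:ball 0 1|lborel. g z * cnj (h z))"
    by (rule set_lebesgue_integral_cong) (use assms in auto)
  then show ?thesis
    by (simp add: bergman_inner_def)
qed

lemma bergman_inner_lincomb:
  assumes f: "f \<in> bergman_space" and g: "g \<in> bergman_space" and h: "h \<in> bergman_space"
  shows "bergman_inner (\<lambda>z. a * f z + b * g z) h = a * bergman_inner f h + b * bergman_inner g h"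
proof -
  have "(LINT z:ball 0 1|lborel. (a * f z + b * g z) * cnj (h z)) =
      (LINT z:ball 0 1|lborel. a * (f z * cnj (h z)) + b * (g z * cnj (h z)))"
    by (simp add: algebra_simps)
  also have "\<dots> = a * (LINT z:ball 0 1|lborel. f z * cnj (h z)) + b * (LINT z:ball 0 1|lborel. g z * cnj (h z))"
    using set_integrable_bergman_inner[OF f h] set_integrable_bergman_inner[OF g h]
    by (simp add: set_integral_add set_integral_mult_right)
  finally show ?thesis
    by (simp add: bergman_inner_def algebra_simps)
qed

lemma bergman_inner_diff:
  "f \<in> bergman_space \<Longrightarrow> g \<in> bergman_space \<Longrightarrow> h \<in> bergman_space \<Longrightarrow>
    bergman_inner (\<lambda>z. f z - g z) h = bergman_inner f h - bergman_inner g h"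
  using bergman_inner_lincomb[of f g h 1 "-1"] by simp

lemma bergman_inner_sum:
  fixes N :: nat
  assumes "\<And>n. n < N \<Longrightarrow> g n \<in> bergman_space" and h: "h \<in> bergman_space"
  shows "bergman_inner (\<lambda>z. \<Sum>n<N. c n * g n z) h = (\<Sum>n<N. c n * bergman_inner (g n) h)"
  using assms(1)
proof (induction N)
  case 0
  show ?case by (simp add: bergman_inner_def)
next
  case (Suc N)
  then show ?case
    using bergman_inner_lincomb[OF bergman_space_sum[of N g c] _ h, of "g N" 1 "c N"] by simp
qed

lemma le_mult_if_le_weighted_mean_squares:
  fixes I x y :: real
  assumes x: "x \<ge> 0" and y: "y \<ge> 0" and le: "\<And>t. t > 0 \<Longrightarrow> I \<le> (t * x\<^sup>2 + y\<^sup>2 / t) / 2"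
  shows "I \<le> x * y"
proof -
  consider "x > 0" "y > 0" | "x = 0" | "y = 0"
    using x y by linarith
  then show ?thesis
  proof cases
    case 1
    then show ?thesis
      using le[of "y / x"] by (simp add: power2_eq_square)
  next
    case 2
    have "((\<lambda>t. (t * x\<^sup>2 + y\<^sup>2 / t) / 2) \<longlongrightarrow> 0) at_top"
      using 2 by simp real_asymp
    moreover have "\<forall>\<^sub>F t in at_top. I \<le> (t * x\<^sup>2 + y\<^sup>2 / t) / 2"
      using eventually_gt_at_top[of 0] by eventually_elim (rule le)
    ultimately show ?thesis
      using 2 by (simp add: tendsto_lowerbound)
  next
    case 3
    have "((\<lambda>t. (t * x\<^sup>2 + y\<^sup>2 / t) / 2) \<longlongrightarrow> 0) (at_right 0)"
      using 3 by simp real_asymp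
    moreover have "\<forall>\<^sub>F t in at_right 0. I \<le> (t * x\<^sup>2 + y\<^sup>2 / t) / 2"
      using eventually_at_right_less[of 0] by eventually_elim (rule le)
    ultimately show ?thesis
      using 3 by (simp add: tendsto_lowerbound)
  qed
qed

lemma bergman_inner_Cauchy_Schwarz:
  assumes f: "f \<in> bergman_space" and g: "g \<in> bergman_space"
  shows "cmod (bergman_inner f g) \<le> bergman_norm f * bergman_norm g"
proof -
  define I where "I = (1 / pi) * (LINT z:ball 0 1|lborel. cmod (f z) * cmod (g z))"
  have "cmod (bergman_inner f g) = (1 / pi) * cmod (LINT z:ball 0 1|lborel. f z * cnj (g z))"
    by (simp add: bergman_inner_def norm_mult norm_divide)
  also have "\<dots> \<le> I"
    unfolding I_def using set_integral_norm_bound[OF set_integrable_bergman_inner[OF f g]]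
    by (simp add: norm_mult divide_right_mono)
  also have "I \<le> bergman_norm f * bergman_norm g"
  proof (rule le_mult_if_le_weighted_mean_squares[OF bergman_norm_nonneg bergman_norm_nonneg])
    fix t :: real
    assume t: "t > 0"
    have "cmod (f z) * cmod (g z) \<le> (t * (cmod (f z))\<^sup>2 + (cmod (g z))\<^sup>2 / t) / 2" for z
    proof -
      have "0 \<le> (t * cmod (f z) - cmod (g z))\<^sup>2 / t"
        using t by simp
      also have "\<dots> = t * (cmod (f z))\<^sup>2 + (cmod (g z))\<^sup>2 / t - 2 * (cmod (f z) * cmod (g z))"
        using t by (simp add: power2_eq_square field_simps)
      finally show ?thesis by simp
    qed
    then have "(LINT z:ball 0 1|lborel. cmod (f z) * cmod (g z)) \<le>
        (LINT z:ball 0 1|lborel. (t * (cmod (f z))\<^sup>2 + (cmod (g z))\<^sup>2 / t) / 2)"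
      using set_integrable_norm[OF set_integrable_bergman_inner[OF f g]] f g
      by (intro set_integral_mono)
         (auto simp: norm_mult set_integrable_bergman_space intro!: set_integral_add set_integral_mult_right
            set_integral_divide_zero)
    also have "\<dots> = (t * (LINT z:ball 0 1|lborel. (cmod (f z))\<^sup>2) + (LINT z:ball 0 1|lborel. (cmod (g z))\<^sup>2) / t) / 2"
      using set_integrable_bergman_space[OF f] set_integrable_bergman_space[OF g]
      by (simp add: set_integral_add set_integral_divide_zero)
    finally show "I \<le> (t * (bergman_norm f)\<^sup>2 + (bergman_norm g)\<^sup>2 / t) / 2"
      unfolding I_def bergman_norm_power2 by (simp add: field_simps)
  qed
  finally show ?thesis .
qed

lemma bergman_norm_add_power2:
  assumes f: "f \<in> bergman_space" and g: "g \<in> bergman_space"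
  shows "(bergman_norm (\<lambda>z. f z + g z))\<^sup>2 =
    (bergman_norm f)\<^sup>2 + (bergman_norm g)\<^sup>2 + 2 * Re (bergman_inner f g)"
proof -
  define R where "R z = Re (f z * cnj (g z))" for z
  have R_int: "set_integrable lborel (ball 0 1) R"
    using integrable_Re[OF set_integrable_bergman_inner[OF f g, unfolded set_integrable_def]]
    by (simp add: set_integrable_def R_def)
  have R_integral: "(LINT z:ball 0 1|lborel. R z) = Re (LINT z:ball 0 1|lborel. f z * cnj (g z))"
    unfolding set_lebesgue_integral_def R_def
    using integral_Re[OF set_integrable_bergman_inner[OF f g, unfolded set_integrable_def]] by simp
  have "(cmod (f z + g z))\<^sup>2 = (cmod (f z))\<^sup>2 + (cmod (g z))\<^sup>2 + 2 * R z" for z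
    unfolding R_def cmod_power2 by (simp add: power2_sum algebra_simps)
  then have "(LINT z:ball 0 1|lborel. (cmod (f z + g z))\<^sup>2) =
      (LINT z:ball 0 1|lborel. (cmod (f z))\<^sup>2) + (LINT z:ball 0 1|lborel. (cmod (g z))\<^sup>2) +
      2 * (LINT z:ball 0 1|lborel. R z)"
    using set_integrable_bergman_space[OF f] set_integrable_bergman_space[OF g] R_int
    by (simp add: set_integral_add set_integral_mult_right)
  then show ?thesis
    by (simp add: bergman_norm_power2 bergman_inner_def R_integral algebra_simps)
qed

lemma bergman_norm_triangle:
  assumes f: "f \<in> bergman_space" and g: "g \<in> bergman_space"
  shows "bergman_norm (\<lambda>z. f z + g z) \<le> bergman_norm f + bergman_norm g"
proof -
  have "Re (bergman_inner f g) \<le> bergman_norm f * bergman_norm g"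
    using bergman_inner_Cauchy_Schwarz[OF f g] complex_Re_le_cmod order_trans by blast
  then have "(bergman_norm (\<lambda>z. f z + g z))\<^sup>2 \<le> (bergman_norm f + bergman_norm g)\<^sup>2"
    by (simp add: bergman_norm_add_power2[OF f g] power2_sum)
  then show ?thesis
    by (simp add: bergman_norm_nonneg power2_le_iff_abs_le add_nonneg_nonneg)
qed

lemma bergman_norm_diff_ge:
  assumes f: "f \<in> bergman_space" and g: "g \<in> bergman_space"
  shows "\<bar>bergman_norm f - bergman_norm g\<bar> \<le> bergman_norm (\<lambda>z. f z - g z)"
proof -
  have triangle: "bergman_norm u \<le> bergman_norm (\<lambda>z. u z - v z) + bergman_norm v"
    if "u \<in> bergman_space" "v \<in> bergman_space" for u v
    using bergman_norm_triangle[OF bergman_space_diff[OF that] that(2)] by simp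
  have "bergman_norm (\<lambda>z. g z - f z) = bergman_norm (\<lambda>z. f z - g z)"
    by (simp add: bergman_norm_def norm_minus_commute)
  with triangle[OF f g] triangle[OF g f] show ?thesis
    by linarith
qed

lemma norm_one_minus_mult_cnj_ge:
  assumes "cmod z \<le> 1"
  shows "1 - cmod a \<le> cmod (1 - z * cnj a)"
proof -
  have "cmod (z * cnj a) \<le> cmod a"
    using assms by (simp add: norm_mult mult_left_le_one_le)
  then show ?thesis
    using norm_triangle_ineq2[of 1 "z * cnj a"] by simp
qed

lemma bergman_kernel_in_space:
  assumes w: "cmod w < 1"
  shows "bergman_kernel w \<in> bergman_space"
proof (rule bounded_in_bergman_space)
  have "1 - z * cnj w \<noteq> 0" if "z \<in> ball 0 1" for z
    using norm_one_minus_mult_cnj_ge[of z w] that w by auto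
  then show "bergman_kernel w holomorphic_on ball 0 1"
    unfolding bergman_kernel_def by (auto intro!: holomorphic_intros)
  fix z :: complex
  assume "z \<in> ball 0 1"
  then have "(1 - cmod w)\<^sup>2 \<le> (cmod (1 - z * cnj w))\<^sup>2"
    using norm_one_minus_mult_cnj_ge[of z w] w by (intro power_mono) auto
  then show "cmod (bergman_kernel w z) \<le> 1 / (1 - cmod w)\<^sup>2"
    unfolding bergman_kernel_def using w by (simp add: norm_divide norm_power frac_le)
qed

text \<open>\<open>kernel_taylor_coeff a n\<close> is \<open>1/n!\<close> times the \<open>n\<close>-th derivative of
  \<open>w \<mapsto> K\<^sub>w\<close> with respect to \<open>cnj w\<close> at \<open>w = a\<close>.\<close>
definition kernel_taylor_coeff :: "complex \<Rightarrow> nat \<Rightarrow> complex \<Rightarrow> complex" where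
  "kernel_taylor_coeff a n = (\<lambda>z. of_nat (Suc n) * z^n / (1 - z * cnj a)^(n+2))"

lemma kernel_taylor_coeff_bound:
  assumes a: "cmod a < 1" and z: "z \<in> ball 0 1"
  shows "cmod (kernel_taylor_coeff a n z) \<le> of_nat (Suc n) / (1 - cmod a)^(n+2)"
proof -
  have "cmod z ^ n \<le> 1"
    using z by (simp add: power_le_one)
  moreover have "(1 - cmod a)^(n+2) \<le> (cmod (1 - z * cnj a))^(n+2)"
    using norm_one_minus_mult_cnj_ge[of z a] z a by (intro power_mono) auto
  moreover have "(1 - cmod a)^(n+2) > 0"
    using a by simp
  ultimately have "real (Suc n) * cmod z ^ n / cmod (1 - z * cnj a) ^ (n + 2) \<le>
      real (Suc n) * 1 / (1 - cmod a)^(n+2)"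
    by (intro frac_le mult_left_mono) auto
  then show ?thesis
    by (simp add: kernel_taylor_coeff_def norm_mult norm_divide norm_power del: of_nat_Suc)
qed

lemma kernel_taylor_coeff_in_space:
  assumes a: "cmod a < 1"
  shows "kernel_taylor_coeff a n \<in> bergman_space"
proof (rule bounded_in_bergman_space[OF _ kernel_taylor_coeff_bound[OF a]])
  have "1 - z * cnj a \<noteq> 0" if "z \<in> ball 0 1" for z
    using norm_one_minus_mult_cnj_ge[of z a] that a by auto
  then show "kernel_taylor_coeff a n holomorphic_on ball 0 1"
    unfolding kernel_taylor_coeff_def by (auto intro!: holomorphic_intros)
qed

lemma bergman_norm_kernel_taylor_coeff_le:
  assumes a: "cmod a < 1"
  shows "bergman_norm (kernel_taylor_coeff a n) \<le> of_nat (Suc n) / (1 - cmod a)^(n+2)"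
  by (rule bergman_norm_le_bound[OF continuous_on_bergman_space[OF kernel_taylor_coeff_in_space[OF a]]
      kernel_taylor_coeff_bound[OF a]])

lemma bergman_kernel_taylor_expansion:
  assumes a: "cmod a < 1" and \<zeta>: "cmod \<zeta> < 1 - cmod a" and z: "z \<in> ball 0 1"
  shows "(\<lambda>n. cnj \<zeta> ^ n * kernel_taylor_coeff a n z) sums bergman_kernel (a + \<zeta>) z"
proof -
  define d where "d = 1 - z * cnj a"
  define x where "x = z * cnj \<zeta> / d"
  have d: "1 - cmod a \<le> cmod d"
    using norm_one_minus_mult_cnj_ge[of z a] z by (simp add: d_def)
  with a have "d \<noteq> 0" by auto
  have "cmod x \<le> cmod \<zeta> / (1 - cmod a)"
    using z a d by (simp add: x_def norm_divide norm_mult mult_left_le_one_le frac_le)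
  also have "\<dots> < 1"
    using \<zeta> a by simp
  finally have x: "cmod x < 1" .
  from sums_divide[OF geometric_deriv_sums[OF x], of "d\<^sup>2"]
  have "(\<lambda>n. of_nat (Suc n) * x ^ n / d\<^sup>2) sums (1 / (1 - x)\<^sup>2 / d\<^sup>2)" .
  moreover have "of_nat (Suc n) * x ^ n / d\<^sup>2 = cnj \<zeta> ^ n * kernel_taylor_coeff a n z" for n
    using \<open>d \<noteq> 0\<close> unfolding x_def kernel_taylor_coeff_def d_def[symmetric]
    by (simp add: power_divide power_mult_distrib field_simps power_add power2_eq_square)
  moreover have "(1 - x) * d = 1 - z * cnj (a + \<zeta>)"
    using \<open>d \<noteq> 0\<close> by (simp add: x_def d_def field_simps)
  then have "1 / (1 - x)\<^sup>2 / d\<^sup>2 = bergman_kernel (a + \<zeta>) z"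
    unfolding bergman_kernel_def by (metis divide_divide_eq_left power_mult_distrib)
  ultimately show ?thesis
    by simp
qed

lemma bergman_kernel_diff_bound:
  assumes w: "cmod w \<le> \<rho>" and v: "cmod v \<le> \<rho>" and \<rho>: "\<rho> < 1" and z: "z \<in> ball 0 1"
  shows "cmod (bergman_kernel w z - bergman_kernel v z) \<le> 4 * cmod (w - v) / (1 - \<rho>)^4"
proof -
  define A where "A = 1 - z * cnj w"
  define B where "B = 1 - z * cnj v"
  have z1: "cmod z \<le> 1"
    using z by simp
  have A_ge: "1 - \<rho> \<le> cmod A" and B_ge: "1 - \<rho> \<le> cmod B"
    using norm_one_minus_mult_cnj_ge[OF z1, of w] norm_one_minus_mult_cnj_ge[OF z1, of v] w v
    by (auto simp: A_def B_def)
  with \<rho> have "A \<noteq> 0" "B \<noteq> 0" by auto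
  then have "bergman_kernel w z - bergman_kernel v z = (B - A) * (B + A) / (A\<^sup>2 * B\<^sup>2)"
    unfolding bergman_kernel_def A_def[symmetric] B_def[symmetric]
    by (simp add: field_simps power2_eq_square)
  moreover have "cmod (B - A) \<le> cmod (w - v)"
  proof -
    have "B - A = z * cnj (w - v)"
      by (simp add: A_def B_def algebra_simps)
    then have "cmod (B - A) = cmod z * cmod (w - v)"
      by (simp only: norm_mult complex_mod_cnj)
    then show ?thesis
      using z1 by (simp add: mult_left_le_one_le)
  qed
  moreover have "cmod (B + A) \<le> 4"
  proof -
    have "cmod (1 - z * cnj u) \<le> 2" if "cmod u \<le> 1" for u
    proof -
      have "cmod (z * cnj u) \<le> 1"
        using z1 that by (simp add: norm_mult mult_le_one)
      then show ?thesis
        using norm_triangle_ineq4[of 1 "z * cnj u"] by simp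
    qed
    then have "cmod A \<le> 2" "cmod B \<le> 2"
      using w v \<rho> by (simp_all add: A_def B_def)
    then show ?thesis
      using norm_triangle_ineq[of B A] by simp
  qed
  moreover have "(1 - \<rho>)^4 \<le> cmod (A\<^sup>2 * B\<^sup>2)"
  proof -
    have "(1 - \<rho>)^4 = (1 - \<rho>)\<^sup>2 * (1 - \<rho>)\<^sup>2"
      by simp
    also have "\<dots> \<le> (cmod A)\<^sup>2 * (cmod B)\<^sup>2"
      using A_ge B_ge \<rho> by (intro mult_mono power_mono) auto
    finally show ?thesis
      by (simp add: norm_mult norm_power)
  qed
  ultimately show ?thesis
    using \<rho> by (simp add: norm_divide norm_mult mult.commute[of 4] frac_le mult_mono)
qed

lemma sums_norm_diff_partial_sum_le:
  fixes u :: "nat \<Rightarrow> 'a::banach"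
  assumes "u sums s" "\<And>n. norm (u n) \<le> b n" "summable b"
  shows "norm (s - (\<Sum>n<N. u n)) \<le> (\<Sum>i. b (i + N))"
proof -
  have "(\<lambda>i. u (i + N)) sums (s - (\<Sum>n<N. u n))"
    by (rule sums_split_initial_segment[OF assms(1)])
  then have "s - (\<Sum>n<N. u n) = (\<Sum>i. u (i + N))"
    by (simp add: sums_iff)
  moreover have "summable (\<lambda>i. b (i + N))"
    by (rule summable_ignore_initial_segment[OF assms(3)])
  ultimately show ?thesis
    using assms(2) by (simp add: norm_suminf_le)
qed

lemma kernel_taylor_partial_sums_tendsto:
  assumes a: "cmod a < 1" and \<zeta>: "cmod \<zeta> < 1 - cmod a"
  shows "(\<lambda>N. bergman_norm (\<lambda>z. (\<Sum>n<N. cnj \<zeta> ^ n * kernel_taylor_coeff a n z) - bergman_kernel (a + \<zeta>) z))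
    \<longlonglongrightarrow> 0"
proof -
  define q where "q = cmod \<zeta> / (1 - cmod a)"
  define b where "b n = of_nat (Suc n) * q^n / (1 - cmod a)\<^sup>2" for n
  have "summable (\<lambda>n. of_nat (Suc n) * q^n)"
    using geometric_deriv_sums[of q] a \<zeta> by (auto simp: q_def sums_iff)
  then have b: "summable b"
    unfolding b_def by (rule summable_divide)
  have term_bound: "cmod (cnj \<zeta> ^ n * kernel_taylor_coeff a n z) \<le> b n" if "z \<in> ball 0 1" for n z
  proof -
    have "cmod (cnj \<zeta> ^ n * kernel_taylor_coeff a n z) \<le> cmod \<zeta> ^ n * (of_nat (Suc n) / (1 - cmod a)^(n+2))"
      unfolding norm_mult norm_power complex_mod_cnj
      by (rule mult_left_mono[OF kernel_taylor_coeff_bound[OF a that]]) simp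
    also have "\<dots> = b n"
      using a by (simp add: b_def q_def power_divide power_add field_simps power2_eq_square)
    finally show ?thesis .
  qed
  have remainder_bound: "bergman_norm (\<lambda>z. (\<Sum>n<N. cnj \<zeta> ^ n * kernel_taylor_coeff a n z) - bergman_kernel (a + \<zeta>) z)
      \<le> (\<Sum>i. b (i + N))" for N
  proof (rule bergman_norm_le_bound)
    have "bergman_kernel (a + \<zeta>) \<in> bergman_space"
      using norm_triangle_ineq[of a \<zeta>] \<zeta> by (intro bergman_kernel_in_space) simp
    then show "continuous_on (ball 0 1)
        (\<lambda>z. (\<Sum>n<N. cnj \<zeta> ^ n * kernel_taylor_coeff a n z) - bergman_kernel (a + \<zeta>) z)"
      by (intro continuous_on_bergman_space bergman_space_diff bergman_space_sum
          kernel_taylor_coeff_in_space a)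
    show "cmod ((\<Sum>n<N. cnj \<zeta> ^ n * kernel_taylor_coeff a n z) - bergman_kernel (a + \<zeta>) z)
        \<le> (\<Sum>i. b (i + N))" if "z \<in> ball 0 1" for z
      using sums_norm_diff_partial_sum_le[OF bergman_kernel_taylor_expansion[OF a \<zeta> that]
          term_bound[OF that] b]
      by (simp add: norm_minus_commute)
  qed
  have "(\<lambda>N. \<Sum>i. b (i + N)) \<longlonglongrightarrow> 0"
    using tendsto_diff[OF tendsto_const[of "suminf b"] summable_LIMSEQ[OF b]]
    by (simp add: suminf_minus_initial_segment[OF b])
  then show ?thesis
    by (rule Lim_null_comparison[rotated]) (simp add: bergman_norm_nonneg remainder_bound)
qed

context
  fixes T :: "(complex \<Rightarrow> complex) \<Rightarrow> (complex \<Rightarrow> complex)"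
  assumes T: "bounded_op_A2 T"
begin

lemma bounded_op_in_space: "f \<in> bergman_space \<Longrightarrow> T f \<in> bergman_space"
  using T by (simp add: bounded_op_A2_def)

lemma bounded_op_lincomb:
  "f \<in> bergman_space \<Longrightarrow> g \<in> bergman_space \<Longrightarrow> z \<in> ball 0 1 \<Longrightarrow>
    T (\<lambda>x. a * f x + b * g x) z = a * T f z + b * T g z"
  using T unfolding bounded_op_A2_def by blast

lemma bounded_op_diff:
  "f \<in> bergman_space \<Longrightarrow> g \<in> bergman_space \<Longrightarrow> z \<in> ball 0 1 \<Longrightarrow>
    T (\<lambda>x. f x - g x) z = T f z - T g z"
  using bounded_op_lincomb[of f g z 1 "-1"] by simp

lemma bounded_op_sum:
  fixes N :: nat
  assumes "\<And>n. n < N \<Longrightarrow> g n \<in> bergman_space" and z: "z \<in> ball 0 1"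
  shows "T (\<lambda>x. \<Sum>n<N. c n * g n x) z = (\<Sum>n<N. c n * T (g n) z)"
  using assms(1)
proof (induction N)
  case 0
  have zero: "(\<lambda>x. 0) \<in> bergman_space"
    using bounded_in_bergman_space[of "\<lambda>x. 0" 0] by simp
  show ?case
    using bounded_op_lincomb[OF zero zero z, of 0 0] by simp
next
  case (Suc N)
  then show ?case
    using bounded_op_lincomb[OF bergman_space_sum[of N g c] _ z, of "g N" 1 "c N"] by simp
qed

lemma bounded_op_norm_bound:
  obtains C where "C \<ge> 0" "\<And>f. f \<in> bergman_space \<Longrightarrow> bergman_norm (T f) \<le> C * bergman_norm f"
    "\<And>f g. f \<in> bergman_space \<Longrightarrow> g \<in> bergman_space \<Longrightarrow>
      bergman_norm (\<lambda>z. T f z - T g z) \<le> C * bergman_norm (\<lambda>z. f z - g z)"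
proof -
  obtain C where C: "\<And>f. f \<in> bergman_space \<Longrightarrow> bergman_norm (T f) \<le> C * bergman_norm f"
    using T unfolding bounded_op_A2_def by blast
  then have bound: "bergman_norm (T f) \<le> \<bar>C\<bar> * bergman_norm f" if "f \<in> bergman_space" for f
    using that bergman_norm_nonneg[of f] by (meson abs_ge_self mult_right_mono order_trans)
  have "bergman_norm (\<lambda>z. T f z - T g z) \<le> \<bar>C\<bar> * bergman_norm (\<lambda>z. f z - g z)"
    if "f \<in> bergman_space" "g \<in> bergman_space" for f g
  proof -
    have "bergman_norm (\<lambda>z. T f z - T g z) = bergman_norm (T (\<lambda>z. f z - g z))"
      using bounded_op_diff[OF that] by (intro bergman_norm_cong) simp
    with bound[OF bergman_space_diff[OF that]] show ?thesis
      by simp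
  qed
  with bound show ?thesis
    using that[of "\<bar>C\<bar>"] by simp
qed

lemma bergman_inner_op_kernel_sums:
  assumes a: "cmod a < 1" and \<zeta>: "cmod \<zeta> < 1 - cmod a" and h: "h \<in> bergman_space"
  shows "(\<lambda>n. cnj \<zeta> ^ n * bergman_inner (T (kernel_taylor_coeff a n)) h)
    sums bergman_inner (T (bergman_kernel (a + \<zeta>))) h"
proof -
  obtain C where op_diff_bound: "\<And>f g. f \<in> bergman_space \<Longrightarrow> g \<in> bergman_space \<Longrightarrow>
      bergman_norm (\<lambda>z. T f z - T g z) \<le> C * bergman_norm (\<lambda>z. f z - g z)"
    using bounded_op_norm_bound by metis
  define S where "S N z = (\<Sum>n<N. cnj \<zeta> ^ n * kernel_taylor_coeff a n z)" for N z
  define K where "K = bergman_kernel (a + \<zeta>)"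
  have K: "K \<in> bergman_space"
    using norm_triangle_ineq[of a \<zeta>] \<zeta> unfolding K_def by (intro bergman_kernel_in_space) simp
  have S: "S N \<in> bergman_space" for N
    unfolding S_def[abs_def] by (intro bergman_space_sum kernel_taylor_coeff_in_space a)
  have partial_sum: "(\<Sum>n<N. cnj \<zeta> ^ n * bergman_inner (T (kernel_taylor_coeff a n)) h) =
      bergman_inner (T (S N)) h" for N
  proof -
    have "(\<Sum>n<N. cnj \<zeta> ^ n * bergman_inner (T (kernel_taylor_coeff a n)) h) =
        bergman_inner (\<lambda>z. \<Sum>n<N. cnj \<zeta> ^ n * T (kernel_taylor_coeff a n) z) h"
      using bounded_op_in_space kernel_taylor_coeff_in_space[OF a] h
      by (intro bergman_inner_sum[symmetric]) auto
    also have "\<dots> = bergman_inner (T (S N)) h"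
      using bounded_op_sum[OF kernel_taylor_coeff_in_space[OF a]]
      by (intro bergman_inner_cong) (simp add: S_def[abs_def])
    finally show ?thesis .
  qed
  have error_bound: "cmod (bergman_inner (T (S N)) h - bergman_inner (T K) h) \<le>
      C * bergman_norm (\<lambda>z. S N z - K z) * bergman_norm h" for N
  proof -
    have "cmod (bergman_inner (T (S N)) h - bergman_inner (T K) h) =
        cmod (bergman_inner (\<lambda>z. T (S N) z - T K z) h)"
      using bounded_op_in_space[OF S] bounded_op_in_space[OF K] h by (simp add: bergman_inner_diff)
    also have "\<dots> \<le> bergman_norm (\<lambda>z. T (S N) z - T K z) * bergman_norm h"
      using bounded_op_in_space[OF S] bounded_op_in_space[OF K] h
      by (intro bergman_inner_Cauchy_Schwarz bergman_space_diff)
    also have "\<dots> \<le> C * bergman_norm (\<lambda>z. S N z - K z) * bergman_norm h"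
      by (rule mult_right_mono[OF op_diff_bound[OF S K] bergman_norm_nonneg])
    finally show ?thesis .
  qed
  have "(\<lambda>N. bergman_norm (\<lambda>z. S N z - K z)) \<longlonglongrightarrow> 0"
    unfolding S_def K_def by (rule kernel_taylor_partial_sums_tendsto[OF a \<zeta>])
  then have "(\<lambda>N. C * bergman_norm (\<lambda>z. S N z - K z) * bergman_norm h) \<longlonglongrightarrow> 0"
    by (rule tendsto_mult_left_zero[OF tendsto_mult_right_zero])
  then have "(\<lambda>N. bergman_inner (T (S N)) h - bergman_inner (T K) h) \<longlonglongrightarrow> 0"
    by (rule Lim_null_comparison[rotated]) (intro always_eventually allI error_bound)
  then show ?thesis
    unfolding sums_def partial_sum K_def by (rule LIM_zero_cancel)
qed

lemma lipschitz_on_norm_op_kernel: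
  assumes \<rho>: "\<rho> < 1"
  obtains L where "L-lipschitz_on (cball 0 \<rho>) (\<lambda>w. bergman_norm (T (bergman_kernel w)))"
proof -
  obtain C where C: "C \<ge> 0" and op_diff_bound: "\<And>f g. f \<in> bergman_space \<Longrightarrow> g \<in> bergman_space \<Longrightarrow>
      bergman_norm (\<lambda>z. T f z - T g z) \<le> C * bergman_norm (\<lambda>z. f z - g z)"
    using bounded_op_norm_bound by metis
  have "dist (bergman_norm (T (bergman_kernel x))) (bergman_norm (T (bergman_kernel y))) \<le>
      (C * 4 / (1 - \<rho>)^4) * dist x y" if x: "x \<in> cball 0 \<rho>" and y: "y \<in> cball 0 \<rho>" for x y
  proof -
    have Kx: "bergman_kernel x \<in> bergman_space" and Ky: "bergman_kernel y \<in> bergman_space"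
      using x y \<rho> by (auto intro: bergman_kernel_in_space)
    have "dist (bergman_norm (T (bergman_kernel x))) (bergman_norm (T (bergman_kernel y))) \<le>
        bergman_norm (\<lambda>z. T (bergman_kernel x) z - T (bergman_kernel y) z)"
      unfolding dist_real_def by (intro bergman_norm_diff_ge bounded_op_in_space Kx Ky)
    also have "\<dots> \<le> C * bergman_norm (\<lambda>z. bergman_kernel x z - bergman_kernel y z)"
      by (rule op_diff_bound[OF Kx Ky])
    also have "bergman_norm (\<lambda>z. bergman_kernel x z - bergman_kernel y z) \<le> 4 * cmod (x - y) / (1 - \<rho>)^4"
      using x y \<rho>
      by (intro bergman_norm_le_bound continuous_on_bergman_space bergman_space_diff Kx Ky
          bergman_kernel_diff_bound) auto
    finally show ?thesis
      using C by (simp add: dist_norm mult_left_mono)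
  qed
  moreover have "C * 4 / (1 - \<rho>)^4 \<ge> 0"
    using C \<rho> by simp
  ultimately show ?thesis
    by (intro that lipschitz_onI)
qed

lemma continuous_on_norm_op_kernel:
  "continuous_on (ball 0 1) (\<lambda>w. bergman_norm (T (bergman_kernel w)))"
proof (rule continuous_at_imp_continuous_on, intro ballI)
  fix w :: complex
  assume "w \<in> ball 0 1"
  then have w: "w \<in> interior (cball 0 ((1 + cmod w) / 2))" "(1 + cmod w) / 2 < 1"
    by auto
  then obtain L where "L-lipschitz_on (cball 0 ((1 + cmod w) / 2)) (\<lambda>w. bergman_norm (T (bergman_kernel w)))"
    using lipschitz_on_norm_op_kernel by blast
  from continuous_on_interior[OF lipschitz_on_continuous_on[OF this] w(1)]
  show "isCont (\<lambda>w. bergman_norm (T (bergman_kernel w))) w" .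
qed

lemma summable_bergman_inner_op_kernel_taylor_coeff:
  assumes ar: "cmod a + r < 1" and r: "r \<ge> 0" and h: "h \<in> bergman_space"
  shows "summable (\<lambda>n. cmod (bergman_inner (T (kernel_taylor_coeff a n)) h) * r^n)"
proof -
  obtain C where C: "C \<ge> 0"
    and op_bound: "\<And>f. f \<in> bergman_space \<Longrightarrow> bergman_norm (T f) \<le> C * bergman_norm f"
    using bounded_op_norm_bound by metis
  have a: "cmod a < 1"
    using ar r by simp
  define q where "q = r / (1 - cmod a)"
  have "summable (\<lambda>n. of_nat (Suc n) * q^n)"
    using geometric_deriv_sums[of q] ar r by (auto simp: q_def sums_iff)
  then have summable: "summable (\<lambda>n. C * bergman_norm h / (1 - cmod a)\<^sup>2 * (of_nat (Suc n) * q^n))"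
    by (rule summable_mult)
  have "cmod (bergman_inner (T (kernel_taylor_coeff a n)) h) \<le>
      bergman_norm (T (kernel_taylor_coeff a n)) * bergman_norm h" for n
    by (intro bergman_inner_Cauchy_Schwarz bounded_op_in_space kernel_taylor_coeff_in_space a h)
  also have "bergman_norm (T (kernel_taylor_coeff a n)) \<le> C * (of_nat (Suc n) / (1 - cmod a)^(n+2))" for n
    using op_bound[OF kernel_taylor_coeff_in_space[OF a]]
      mult_left_mono[OF bergman_norm_kernel_taylor_coeff_le[OF a] C] order_trans by blast
  finally have coeff_bound: "cmod (bergman_inner (T (kernel_taylor_coeff a n)) h) \<le>
      C * (of_nat (Suc n) / (1 - cmod a)^(n+2)) * bergman_norm h" for n
    by (simp add: bergman_norm_nonneg mult_right_mono)
  have "cmod (bergman_inner (T (kernel_taylor_coeff a n)) h) * r^n \<le>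
      C * (of_nat (Suc n) / (1 - cmod a)^(n+2)) * bergman_norm h * r^n" for n
    using mult_right_mono[OF coeff_bound zero_le_power[OF r]] .
  also have "\<dots> n = C * bergman_norm h / (1 - cmod a)\<^sup>2 * (of_nat (Suc n) * q^n)" for n
    using a by (simp add: q_def power_divide power_add field_simps power2_eq_square)
  finally show ?thesis
    using r by (intro summable_comparison_test'[OF summable]) auto
qed

lemma continuous_on_norm_op_kernel_powr:
  "p > 0 \<Longrightarrow> continuous_on (ball 0 1) (\<lambda>w. bergman_norm (T (bergman_kernel w)) powr p)"
  by (intro continuous_on_powr' continuous_on_norm_op_kernel continuous_on_const)
     (auto simp: bergman_norm_nonneg)

lemma norm_power_series_bergman_inner_op_kernel_le:
  assumes a: "cmod a < 1" and \<zeta>: "cmod \<zeta> < 1 - cmod a" and h: "h \<in> bergman_space"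
  shows "cmod (\<Sum>n. cnj (bergman_inner (T (kernel_taylor_coeff a n)) h) * \<zeta>^n) \<le>
    bergman_norm (T (bergman_kernel (a + \<zeta>))) * bergman_norm h"
proof -
  have "(\<lambda>n. cnj (cnj \<zeta> ^ n * bergman_inner (T (kernel_taylor_coeff a n)) h))
      sums cnj (bergman_inner (T (bergman_kernel (a + \<zeta>))) h)"
    using bergman_inner_op_kernel_sums[OF a \<zeta> h] by (simp only: sums_cnj)
  then have "cmod (\<Sum>n. cnj (bergman_inner (T (kernel_taylor_coeff a n)) h) * \<zeta>^n) =
      cmod (bergman_inner (T (bergman_kernel (a + \<zeta>))) h)"
    by (simp add: sums_iff mult.commute)
  also have "\<dots> \<le> bergman_norm (T (bergman_kernel (a + \<zeta>))) * bergman_norm h"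
    using \<zeta> norm_triangle_ineq[of a \<zeta>]
    by (intro bergman_inner_Cauchy_Schwarz bounded_op_in_space bergman_kernel_in_space h) auto
  finally show ?thesis .
qed

lemma norm_op_kernel_powr_sub_mean_value:
  assumes p: "p > 0" and r: "r > 0" and ar: "cmod a + r < 1"
  defines "F \<equiv> \<lambda>w. bergman_norm (T (bergman_kernel w)) powr p"
  shows "2*pi * F a \<le> (LINT t:{0..2*pi}|lborel. F (a + r * cis t))"
proof -
  define N where "N w = bergman_norm (T (bergman_kernel w))" for w
  have a: "cmod a < 1"
    using ar r by simp
  have circle: "cmod (of_real r * cis t) < 1 - cmod a" for t
    using ar r by (simp add: norm_mult)
  then have "a + of_real r * cis t \<in> ball 0 1" for t
    using norm_triangle_ineq[of a "of_real r * cis t"] by (smt (verit) mem_ball_0)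
  then have F_int: "set_integrable lborel {0..2*pi} (\<lambda>t. F (a + r * cis t))"
    unfolding F_def
    by (intro borel_integrable_atLeastAtMost' continuous_on_compose2[OF continuous_on_norm_op_kernel_powr[OF p]])
       (auto intro!: continuous_intros)
  show ?thesis
  proof (cases "N a = 0")
    case True
    with p have "F a = 0"
      by (simp add: F_def N_def)
    then show ?thesis
      by (simp add: F_def set_lebesgue_integral_def integral_nonneg_AE)
  next
    case False
    then have Na: "N a > 0"
      using bergman_norm_nonneg by (simp add: N_def order_less_le)
    define h where "h = T (bergman_kernel a)"
    define c where "c n = cnj (bergman_inner (T (kernel_taylor_coeff a n)) h)" for n
    have h: "h \<in> bergman_space"
      unfolding h_def by (intro bounded_op_in_space bergman_kernel_in_space a)
    have "kernel_taylor_coeff a 0 = bergman_kernel a"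
      by (simp add: kernel_taylor_coeff_def bergman_kernel_def fun_eq_iff power2_eq_square)
    then have "c 0 = of_real ((N a)\<^sup>2)"
      by (simp add: c_def h_def N_def bergman_inner_self)
    then have "(2*pi * F a) * N a powr p = 2*pi * cmod (c 0) powr p"
      using Na by (simp add: F_def N_def power2_eq_square norm_mult powr_mult)
    also have "\<dots> \<le> (LINT t:{0..2*pi}|lborel. cmod (\<Sum>n. c n * (of_real r * cis t)^n) powr p)"
      using summable_bergman_inner_op_kernel_taylor_coeff[OF ar _ h] r p
      by (intro power_series_circle_integral_powr_ge) (simp_all add: c_def)
    also have "\<dots> \<le> (LINT t:{0..2*pi}|lborel. F (a + r * cis t) * N a powr p)"
    proof (rule set_integral_mono')
      show "set_integrable lborel {0..2*pi} (\<lambda>t. F (a + r * cis t) * N a powr p)"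
        using F_int by (rule set_integrable_mult_left)
      fix t
      have "cmod (\<Sum>n. c n * (of_real r * cis t)^n) powr p \<le> (N (a + of_real r * cis t) * N a) powr p"
        using norm_power_series_bergman_inner_op_kernel_le[OF a circle h] p
        by (intro powr_mono2) (simp_all add: c_def N_def h_def)
      also have "\<dots> = F (a + r * cis t) * N a powr p"
        by (simp add: F_def N_def powr_mult bergman_norm_nonneg)
      finally show "cmod (\<Sum>n. c n * (of_real r * cis t)^n) powr p \<le> F (a + r * cis t) * N a powr p" .
    qed (simp add: F_def)
    also have "\<dots> = (LINT t:{0..2*pi}|lborel. F (a + r * cis t)) * N a powr p"
      by (rule set_integral_mult_left)
    finally show ?thesis
      using Na by simp
  qed
qed

end

lemma subharmonic_onI:
  assumes F: "continuous_on S F"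
    and mean: "\<And>a r. r > 0 \<Longrightarrow> cball a r \<subseteq> S \<Longrightarrow> 2*pi * F a \<le> (LINT t:{0..2*pi}|lborel. F (a + r * cis t))"
  shows "subharmonic_on S F"
proof -
  have "upper_semicontinuous_on S F"
    using F by (auto simp: upper_semicontinuous_on_def continuous_on_def intro: order_tendstoD(2))
  moreover have "set_integrable lborel {0..2*pi} (\<lambda>t. F (a + r * cis t))"
    if "r > 0" "cball a r \<subseteq> S" for a r
  proof -
    have "a + r * cis t \<in> S" for t
      using that by (auto simp: dist_norm norm_mult)
    then show ?thesis
      by (intro borel_integrable_atLeastAtMost' continuous_on_compose2[OF F] continuous_intros) auto
  qed
  ultimately show ?thesis
    using mean by (simp add: subharmonic_on_def field_simps)
qed

theorem lemma27:
  fixes T :: "(complex \<Rightarrow> complex) \<Rightarrow> (complex \<Rightarrow> complex)" and p :: real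
  assumes "bounded_op_A2 T" and "0 < p"
  shows "subharmonic_on (ball 0 1) (\<lambda>w. bergman_norm (T (bergman_kernel w)) powr p)"
proof (rule subharmonic_onI)
  show "continuous_on (ball 0 1) (\<lambda>w. bergman_norm (T (bergman_kernel w)) powr p)"
    by (rule continuous_on_norm_op_kernel_powr[OF assms])
  fix a :: complex and r :: real
  assume "r > 0" "cball a r \<subseteq> ball 0 1"
  then show "2*pi * bergman_norm (T (bergman_kernel a)) powr p \<le>
      (LINT t:{0..2*pi}|lborel. bergman_norm (T (bergman_kernel (a + r * cis t))) powr p)"
    using norm_op_kernel_powr_sub_mean_value[OF assms] by (simp add: cball_subset_ball_iff)
qed

end
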